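(* Let $\{Y_x\}_{x\in\mathcal{X}}$ be a Gaussian process with prior mean $\mu_x$ and prior covariance $\sigma_{xx'}$. Let $\mathcal{D}\subset\mathcal{X}$ be a finite set of inputs with observed outputs $y_{\mathcal{D}}$, partitioned into pairwise disjoint sets $\mathcal{D}_1,\ldots,\mathcal{D}_M$ with $|\mathcal{D}_m|=|\mathcal{D}|/M$, and let $\mathcal{U}\subseteq\mathcal{X}\setminus\mathcal{D}$ be a finite set of test inputs. Let $\sigma_n^2>0$ and let $F\in\mathbb{R}^{R\times|\mathcal{D}|}$ be the (upper triangular) incomplete Cholesky factor used to approximate $\Sigma_{\mathcal{D}\mathcal{D}}\approx F^\top F+\sigma_n^2 I$, written columnwise as $F=(F_1\cdots F_M)$ with $F_m\in\mathbb{R}^{R\times|\mathcal{D}_m|}$ the columns corresponding to $\mathcal{D}_m$. For $m=1,\ldots,M$ define $\dot{y}_m\triangleq F_m(y_{\mathcal{D}_m}-\mu_{\mathcal{D}_m})$, $\dot{\Sigma}_m\triangleq F_m\Sigma_{\mathcal{D}_m\mathcal{U}}$, $\Phi_m\triangleq F_mF_m^\top$; let $\Phi\triangleq I+\sigma_n^{-2}\sum_{m=1}^M\Phi_m$, $\ddot{y}\triangleq\Phi^{-1}\sum_{m=1}^M\dot{y}_m$, $\ddot{\Sigma}\triangleq\Phi^{-1}\sum_{m=1}^M\dot{\Sigma}_m$; let $\widetilde{\mu}^m_{\mathcal{U}}\triangleq\sigma_n^{-2}\Sigma_{\mathcal{U}\mathcal{D}_m}(y_{\mathcal{D}_m}-\mu_{\mathcal{D}_m})-\sigma_n^{-4}\dot{\Sigma}_m^\top\ddot{y}$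 and $\widetilde{\Sigma}^m_{\mathcal{U}\mathcal{U}}\triangleq\sigma_n^{-2}\Sigma_{\mathcal{U}\mathcal{D}_m}\Sigma_{\mathcal{D}_m\mathcal{U}}-\sigma_n^{-4}\dot{\Sigma}_m^\top\ddot{\Sigma}$; and let $\widetilde{\mu}_{\mathcal{U}}\triangleq\mu_{\mathcal{U}}+\sum_{m=1}^M\widetilde{\mu}^m_{\mathcal{U}}$ and $\widetilde{\Sigma}_{\mathcal{U}\mathcal{U}}\triangleq\Sigma_{\mathcal{U}\mathcal{U}}-\sum_{m=1}^M\widetilde{\Sigma}^m_{\mathcal{U}\mathcal{U}}$. Let $\mu^{\mathrm{ICF}}_{\mathcal{U}|\mathcal{D}}\triangleq\mu_{\mathcal{U}}+\Sigma_{\mathcal{U}\mathcal{D}}(F^\top F+\sigma_n^2I)^{-1}(y_{\mathcal{D}}-\mu_{\mathcal{D}})$ and $\Sigma^{\mathrm{ICF}}_{\mathcal{U}\mathcal{U}|\mathcal{D}}\triangleq\Sigma_{\mathcal{U}\mathcal{U}}-\Sigma_{\mathcal{U}\mathcal{D}}(F^\top F+\sigma_n^2I)^{-1}\Sigma_{\mathcal{D}\mathcal{U}}$. Then $\widetilde{\mu}_{\mathcal{U}}=\mu^{\mathrm{ICF}}_{\mathcal{U}|\mathcal{D}}$ and $\widetilde{\Sigma}_{\mathcal{U}\mathcal{U}}=\Sigma^{\mathrm{ICF}}_{\mathcal{U}\mathcal{U}|\mathcal{D}}$.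
   Context: For finite sets $\mathcal{A},\mathcal{B}\subset\mathcal{X}$, $\mu_{\mathcal{A}}$ denotes the column vector of prior means $\mu_x$, $x\in\mathcal{A}$, and $\Sigma_{\mathcal{A}\mathcal{B}}$ the matrix of prior covariances $\sigma_{xx'}$, $x\in\mathcal{A}$, $x'\in\mathcal{B}$; $\Sigma_{\mathcal{B}\mathcal{A}}$ is its transpose. Vectors and matrices indexed by $\mathcal{D}$ are ordered consistently with the partition $\mathcal{D}_1,\ldots,\mathcal{D}_M$ (the same ordering as the columns of $F$). $I$ denotes an identity matrix of the appropriate size. *)

theory Defs
  imports "Jordan_Normal_Form.Gauss_Jordan_Elimination"
begin

definition cov_kernel :: "('x \<Rightarrow> 'x \<Rightarrow> real) \<Rightarrow> bool" where
  "cov_kernel \<sigma> \<longleftrightarrow> (\<forall>x x'. \<sigma> x x' = \<sigma> x' x) \<and>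
     (\<forall>(xs :: 'x list) (c :: nat \<Rightarrow> real).
        (\<Sum>i<length xs. \<Sum>j<length xs. c i * c j * \<sigma> (xs ! i) (xs ! j)) \<ge> 0)"

definition vec_on :: "('x \<Rightarrow> real) \<Rightarrow> 'x list \<Rightarrow> real vec" where
  "vec_on f xs = vec (length xs) (\<lambda>i. f (xs ! i))"

definition cov_mat :: "('x \<Rightarrow> 'x \<Rightarrow> real) \<Rightarrow> 'x list \<Rightarrow> 'x list \<Rightarrow> real mat" where
  "cov_mat \<sigma> as bs = mat (length as) (length bs) (\<lambda>(i, j). \<sigma> (as ! i) (bs ! j))"

definition col_block :: "real mat \<Rightarrow> nat \<Rightarrow> nat \<Rightarrow> real mat" where
  "col_block F off n = mat (dim_row F) n (\<lambda>(i, j). F $$ (i, off + j))"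

definition minv :: "real mat \<Rightarrow> real mat" where
  "minv A = the (mat_inverse A)"

fun msum :: "nat \<Rightarrow> nat \<Rightarrow> (nat \<Rightarrow> real mat) \<Rightarrow> nat \<Rightarrow> real mat" where
  "msum nr nc f 0 = 0\<^sub>m nr nc"
| "msum nr nc f (Suc k) = msum nr nc f k + f k"

fun vsum :: "nat \<Rightarrow> (nat \<Rightarrow> real vec) \<Rightarrow> nat \<Rightarrow> real vec" where
  "vsum n f 0 = 0\<^sub>v n"
| "vsum n f (Suc k) = vsum n f k + f k"

end

(* The columns of F and the rows of Sigma_DU are cut along the same partition
   D_1, ..., D_M, so the local summaries add up to global products:
   sum_m F_m F_m^T = F F^T and sum_m F_m Sigma_{D_m U} = F Sigma_DU, and likewise for
   Sigma_{U D_m} (y_{D_m} - mu_{D_m}) and Sigma_{U D_m} Sigma_{D_m U}.  The distributed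
   predictions therefore reduce to
     sigma_n^-2 Sigma_UD w - sigma_n^-4 Sigma_UD F^T Phi^-1 F w    (w = y_D - mu_D),
   which is Sigma_UD (F^T F + sigma_n^2 I)^-1 w by the Woodbury identity: pushing F^T
   through Phi = I + sigma_n^-2 F F^T gives
   (I + sigma_n^-2 F^T F) (I - sigma_n^-2 F^T Phi^-1 F) = I,
   and Phi is invertible, being the identity plus a positive semidefinite matrix. *)

theory Submission
  imports Defs "Jordan_Normal_Form.Determinant"
begin

section \<open>Finite sums of matrices and vectors\<close>

lemma msum_carrier:
  "(\<And>m. m < k \<Longrightarrow> f m \<in> carrier_mat nr nc) \<Longrightarrow> msum nr nc f k \<in> carrier_mat nr nc"
  by (induction k) auto

lemma vsum_carrier:
  "(\<And>m. m < k \<Longrightarrow> f m \<in> carrier_vec n) \<Longrightarrow> vsum n f k \<in> carrier_vec n"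
  by (induction k) auto

lemma dim_msum [simp]:
  assumes "\<And>m. m < k \<Longrightarrow> f m \<in> carrier_mat nr nc"
  shows "dim_row (msum nr nc f k) = nr" "dim_col (msum nr nc f k) = nc"
  using assms msum_carrier carrier_matD by metis+

lemma dim_vsum [simp]:
  assumes "\<And>m. m < k \<Longrightarrow> f m \<in> carrier_vec n"
  shows "dim_vec (vsum n f k) = n"
  using assms vsum_carrier carrier_vecD by metis

lemma index_msum:
  assumes "\<And>m. m < k \<Longrightarrow> f m \<in> carrier_mat nr nc" and "i < nr" "j < nc"
  shows "msum nr nc f k $$ (i, j) = (\<Sum>m<k. f m $$ (i, j))"
  using assms
proof (induction k)
  case (Suc k)
  then have "dim_row (f k) = nr" "dim_col (f k) = nc" by auto
  with Suc show ?case by simp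
qed simp

lemma index_vsum:
  assumes "\<And>m. m < k \<Longrightarrow> f m \<in> carrier_vec n" and "i < n"
  shows "vsum n f k $ i = (\<Sum>m<k. f m $ i)"
  using assms
proof (induction k)
  case (Suc k)
  then have "dim_vec (f k) = n" by auto
  \<comment> \<open>with carrier_vecD the simplifier would rewrite this dimension fact to True\<close>
  with Suc show ?case by (simp del: carrier_vecD)
qed simp

lemma msum_diff:
  assumes f: "\<And>m. m < k \<Longrightarrow> f m \<in> carrier_mat nr nc" and g: "\<And>m. m < k \<Longrightarrow> g m \<in> carrier_mat nr nc"
  shows "msum nr nc (\<lambda>m. f m - g m) k = msum nr nc f k - msum nr nc g k"
proof -
  have fg: "f m - g m \<in> carrier_mat nr nc" if "m < k" for m
    using g[OF that] by (rule minus_carrier_mat)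
  have "dim_row (g m) = nr" "dim_col (g m) = nc" if "m < k" for m
    using g[OF that] by auto
  with f g fg show ?thesis
    by (intro eq_matI) (simp_all add: index_msum sum_subtractf)
qed

lemma vsum_diff:
  assumes f: "\<And>m. m < k \<Longrightarrow> f m \<in> carrier_vec n" and g: "\<And>m. m < k \<Longrightarrow> g m \<in> carrier_vec n"
  shows "vsum n (\<lambda>m. f m - g m) k = vsum n f k - vsum n g k"
proof -
  have fg: "f m - g m \<in> carrier_vec n" if "m < k" for m
    using f[OF that] g[OF that] by simp
  have "dim_vec (g m) = n" if "m < k" for m
    using g[OF that] by auto
  with f g fg show ?thesis
    by (intro eq_vecI) (simp_all add: index_vsum sum_subtractf del: carrier_vecD)
qed

lemma msum_smult:
  assumes f: "\<And>m. m < k \<Longrightarrow> f m \<in> carrier_mat nr nc"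
  shows "msum nr nc (\<lambda>m. a \<cdot>\<^sub>m f m) k = a \<cdot>\<^sub>m msum nr nc f k"
proof -
  have "dim_row (f m) = nr" "dim_col (f m) = nc" if "m < k" for m
    using f[OF that] by auto
  with f show ?thesis
    by (intro eq_matI) (simp_all add: index_msum sum_distrib_left)
qed

lemma vsum_smult:
  assumes f: "\<And>m. m < k \<Longrightarrow> f m \<in> carrier_vec n"
  shows "vsum n (\<lambda>m. a \<cdot>\<^sub>v f m) k = a \<cdot>\<^sub>v vsum n f k"
proof -
  have "dim_vec (f m) = n" if "m < k" for m
    using f[OF that] by auto
  with f show ?thesis
    by (intro eq_vecI) (simp_all add: index_vsum sum_distrib_left del: carrier_vecD)
qed

lemma msum_mult_right:
  assumes "\<And>m. m < k \<Longrightarrow> f m \<in> carrier_mat nr p" and H: "H \<in> carrier_mat p nc"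
  shows "msum nr nc (\<lambda>m. f m * H) k = msum nr p f k * H"
  using assms(1)
proof (induction k)
  case 0
  show ?case using H by (simp add: left_mult_zero_mat)
next
  case (Suc k)
  then have "msum nr p f k \<in> carrier_mat nr p" "f k \<in> carrier_mat nr p"
    by (auto intro: msum_carrier)
  with Suc H show ?case by (simp add: add_mult_distrib_mat)
qed

lemma vsum_mult_mat_vec:
  assumes "\<And>m. m < k \<Longrightarrow> f m \<in> carrier_mat n p" and x: "x \<in> carrier_vec p"
  shows "vsum n (\<lambda>m. f m *\<^sub>v x) k = msum n p f k *\<^sub>v x"
  using assms(1)
proof (induction k)
  case 0
  show ?case using x by (intro eq_vecI) auto
next
  case (Suc k)
  then have "msum n p f k \<in> carrier_mat n p" "f k \<in> carrier_mat n p"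
    by (auto intro: msum_carrier)
  with Suc x show ?case by (simp add: add_mult_distrib_mat_vec)
qed

lemma msum_transpose:
  assumes "\<And>m. m < k \<Longrightarrow> f m \<in> carrier_mat nr nc"
  shows "msum nc nr (\<lambda>m. transpose_mat (f m)) k = transpose_mat (msum nr nc f k)"
  using assms
proof (induction k)
  case (Suc k)
  then have "msum nr nc f k \<in> carrier_mat nr nc" "f k \<in> carrier_mat nr nc"
    by (auto intro: msum_carrier)
  with Suc show ?case by (simp add: transpose_add)
qed simp

lemma msum_cong: "(\<And>m. m < k \<Longrightarrow> f m = g m) \<Longrightarrow> msum nr nc f k = msum nr nc g k"
  by (induction k) auto

lemma vsum_cong: "(\<And>m. m < k \<Longrightarrow> f m = g m) \<Longrightarrow> vsum n f k = vsum n g k"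
  by (induction k) auto

section \<open>Blocks along a partition of the index list\<close>

definition row_block :: "'a mat \<Rightarrow> nat \<Rightarrow> nat \<Rightarrow> 'a mat" where
  "row_block B off n = mat n (dim_col B) (\<lambda>(i, j). B $$ (off + i, j))"

definition vec_block :: "'a vec \<Rightarrow> nat \<Rightarrow> nat \<Rightarrow> 'a vec" where
  "vec_block v off n = vec n (\<lambda>i. v $ (off + i))"

lemma col_block_all: "A \<in> carrier_mat nr n \<Longrightarrow> col_block A 0 n = A"
  by (intro eq_matI) (auto simp: col_block_def)

lemma row_block_all: "B \<in> carrier_mat n nc \<Longrightarrow> row_block B 0 n = B"
  by (intro eq_matI) (auto simp: row_block_def)

lemma vec_block_all: "v \<in> carrier_vec n \<Longrightarrow> vec_block v 0 n = v"
  by (intro eq_vecI) (auto simp: vec_block_def)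

lemma transpose_col_block:
  "off + n \<le> dim_col A \<Longrightarrow> transpose_mat (col_block A off n) = row_block (transpose_mat A) off n"
  by (intro eq_matI) (auto simp: col_block_def row_block_def)

lemma sum_atLeast0LessThan_add:
  "(\<Sum>t\<in>{0..<a + b}. f t) = (\<Sum>t\<in>{0..<a}. f t) + (\<Sum>t\<in>{0..<b}. f (a + t :: nat))"
  using sum.atLeastLessThan_concat[of 0 a "a + b" f] sum.shift_bounds_nat_ivl[of f 0 a b]
  by (simp add: add.commute)

lemma col_block_mult_row_block_add:
  "col_block A off (a + b) * row_block B off (a + b)
   = col_block A off a * row_block B off a + col_block A (off + a) b * row_block B (off + a) b"
  by (intro eq_matI)
    (auto simp: col_block_def row_block_def scalar_prod_def sum_atLeast0LessThan_add add.assoc)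

lemma col_block_mult_vec_block_add:
  "col_block A off (a + b) *\<^sub>v vec_block v off (a + b)
   = col_block A off a *\<^sub>v vec_block v off a + col_block A (off + a) b *\<^sub>v vec_block v (off + a) b"
  by (intro eq_vecI)
    (auto simp: col_block_def vec_block_def scalar_prod_def sum_atLeast0LessThan_add add.assoc)

definition block_offset :: "'a list list \<Rightarrow> nat \<Rightarrow> nat" where
  "block_offset xss m = sum_list (map length (take m xss))"

lemma length_concat_take: "length (concat (take m xss)) = block_offset xss m"
  by (simp add: block_offset_def length_concat)

lemma block_offset_Suc:
  "m < length xss \<Longrightarrow> block_offset xss (Suc m) = block_offset xss m + length (xss ! m)"
  by (simp add: block_offset_def take_Suc_conv_app_nth)

lemma block_offset_length: "block_offset xss (length xss) = length (concat xss)"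
  by (simp add: block_offset_def length_concat)

lemma block_offset_bound:
  assumes "m < length xss"
  shows "block_offset xss m + length (xss ! m) \<le> length (concat xss)"
proof -
  have "length (concat (take (Suc m) xss)) \<le> length (concat xss)"
    by (metis append_take_drop_id concat_append length_append le_add1)
  with assms show ?thesis by (simp add: length_concat_take block_offset_Suc)
qed

lemma nth_concat_block_offset:
  assumes "m < length xss" "i < length (xss ! m)"
  shows "concat xss ! (block_offset xss m + i) = xss ! m ! i"
proof -
  have "concat xss = concat (take m xss) @ xss ! m @ concat (drop (Suc m) xss)"
    using assms(1) by (metis concat.simps(2) concat_append id_take_nth_drop)
  with assms(2) show ?thesis by (simp add: nth_append length_concat_take)
qed

definition part_cols :: "real mat \<Rightarrow> 'a list list \<Rightarrow> nat \<Rightarrow> real mat" where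
  "part_cols A xss m = col_block A (block_offset xss m) (length (xss ! m))"

definition part_rows :: "'b mat \<Rightarrow> 'a list list \<Rightarrow> nat \<Rightarrow> 'b mat" where
  "part_rows B xss m = row_block B (block_offset xss m) (length (xss ! m))"

definition part_vec :: "'b vec \<Rightarrow> 'a list list \<Rightarrow> nat \<Rightarrow> 'b vec" where
  "part_vec v xss m = vec_block v (block_offset xss m) (length (xss ! m))"

lemma part_cols_carrier [simp]:
  "A \<in> carrier_mat nr nc \<Longrightarrow> part_cols A xss m \<in> carrier_mat nr (length (xss ! m))"
  by (auto simp: part_cols_def col_block_def)

lemma part_rows_carrier [simp]:
  "B \<in> carrier_mat nr nc \<Longrightarrow> part_rows B xss m \<in> carrier_mat (length (xss ! m)) nc"
  by (auto simp: part_rows_def row_block_def)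

lemma part_vec_carrier [simp]: "part_vec v xss m \<in> carrier_vec (length (xss ! m))"
  by (simp add: part_vec_def vec_block_def)

lemma transpose_part_cols:
  "A \<in> carrier_mat nr (length (concat xss)) \<Longrightarrow> m < length xss \<Longrightarrow>
   transpose_mat (part_cols A xss m) = part_rows (transpose_mat A) xss m"
  using block_offset_bound[of m xss] by (simp add: part_cols_def part_rows_def transpose_col_block)

lemma msum_part_products:
  assumes A: "A \<in> carrier_mat nr (length (concat xss))" and B: "B \<in> carrier_mat (length (concat xss)) nc"
  shows "msum nr nc (\<lambda>m. part_cols A xss m * part_rows B xss m) (length xss) = A * B"
proof -
  have "msum nr nc (\<lambda>m. part_cols A xss m * part_rows B xss m) k
      = col_block A 0 (block_offset xss k) * row_block B 0 (block_offset xss k)"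
    if "k \<le> length xss" for k
    using that
  proof (induction k)
    case 0
    show ?case using A B by (intro eq_matI) (auto simp: col_block_def row_block_def block_offset_def)
  next
    case (Suc k)
    then show ?case
      using col_block_mult_row_block_add[of A 0 "block_offset xss k" "length (xss ! k)" B]
      by (simp add: block_offset_Suc part_cols_def part_rows_def)
  qed
  from this[of "length xss"] show ?thesis
    using A B by (simp add: block_offset_length col_block_all row_block_all)
qed

lemma vsum_part_products:
  assumes A: "A \<in> carrier_mat n (length (concat xss))" and v: "v \<in> carrier_vec (length (concat xss))"
  shows "vsum n (\<lambda>m. part_cols A xss m *\<^sub>v part_vec v xss m) (length xss) = A *\<^sub>v v"
proof -
  have "vsum n (\<lambda>m. part_cols A xss m *\<^sub>v part_vec v xss m) k
      = col_block A 0 (block_offset xss k) *\<^sub>v vec_block v 0 (block_offset xss k)"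
    if "k \<le> length xss" for k
    using that
  proof (induction k)
    case 0
    show ?case using A by (intro eq_vecI) (auto simp: col_block_def vec_block_def block_offset_def)
  next
    case (Suc k)
    then show ?case
      using col_block_mult_vec_block_add[of A 0 "block_offset xss k" "length (xss ! k)" v]
      by (simp add: block_offset_Suc part_cols_def part_vec_def)
  qed
  from this[of "length xss"] show ?thesis
    using A v by (simp add: block_offset_length col_block_all vec_block_all)
qed

lemma cov_mat_carrier [simp]: "cov_mat \<sigma> xs ys \<in> carrier_mat (length xs) (length ys)"
  by (simp add: cov_mat_def)

lemma vec_on_carrier [simp]: "vec_on f xs \<in> carrier_vec (length xs)"
  by (simp add: vec_on_def)

lemma vec_on_diff: "vec_on f xs - vec_on g xs = vec_on (\<lambda>x. f x - g x) xs"
  by (intro eq_vecI) (auto simp: vec_on_def)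

lemma transpose_cov_mat: "cov_kernel \<sigma> \<Longrightarrow> transpose_mat (cov_mat \<sigma> xs ys) = cov_mat \<sigma> ys xs"
  by (intro eq_matI) (auto simp: cov_kernel_def cov_mat_def)

lemma part_cols_cov_mat:
  "m < length xss \<Longrightarrow> part_cols (cov_mat \<sigma> ys (concat xss)) xss m = cov_mat \<sigma> ys (xss ! m)"
  using block_offset_bound[of m xss]
  by (intro eq_matI) (auto simp: part_cols_def col_block_def cov_mat_def nth_concat_block_offset)

lemma part_rows_cov_mat:
  "m < length xss \<Longrightarrow> part_rows (cov_mat \<sigma> (concat xss) ys) xss m = cov_mat \<sigma> (xss ! m) ys"
  using block_offset_bound[of m xss]
  by (intro eq_matI) (auto simp: part_rows_def row_block_def cov_mat_def nth_concat_block_offset)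

lemma part_vec_vec_on:
  "m < length xss \<Longrightarrow> part_vec (vec_on f (concat xss)) xss m = vec_on f (xss ! m)"
  using block_offset_bound[of m xss]
  by (intro eq_vecI) (auto simp: part_vec_def vec_block_def vec_on_def nth_concat_block_offset)

section \<open>The Woodbury identity\<close>

lemma smult_mult_mat_vec:
  fixes A :: "'a :: comm_semiring_0 mat"
  assumes "A \<in> carrier_mat nr nc" and "v \<in> carrier_vec nc"
  shows "(k \<cdot>\<^sub>m A) *\<^sub>v v = k \<cdot>\<^sub>v (A *\<^sub>v v)"
  using assms by (intro eq_vecI) (auto simp: scalar_prod_def sum_distrib_left ac_simps)

lemma minv_inverse:
  fixes A :: "real mat"
  assumes A: "A \<in> carrier_mat n n" and "det A \<noteq> 0"
  shows "minv A \<in> carrier_mat n n" "A * minv A = 1\<^sub>m n" "minv A * A = 1\<^sub>m n"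
proof -
  have "A \<in> Units (ring_mat TYPE(real) n ())"
    using det_non_zero_imp_unit[OF assms] .
  then obtain B where B: "mat_inverse A = Some B"
    using mat_inverse(1)[OF A] by fastforce
  then have "minv A = B" by (simp add: minv_def)
  with mat_inverse(2)[OF A B] show "minv A \<in> carrier_mat n n" "A * minv A = 1\<^sub>m n" "minv A * A = 1\<^sub>m n"
    by auto
qed

lemma minv_eqI:
  fixes A W :: "real mat"
  assumes A: "A \<in> carrier_mat n n" and W: "W \<in> carrier_mat n n" and AW: "A * W = 1\<^sub>m n"
  shows "minv A = W"
proof -
  have "det A * det W = 1" using det_mult[OF A W] AW by simp
  then have "det A \<noteq> 0" by auto
  note inv = minv_inverse[OF A this]
  have "minv A = minv A * (A * W)" using inv(1) AW by simp
  also have "\<dots> = (minv A * A) * W" using assoc_mult_mat[OF inv(1) A W] by simp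
  also have "\<dots> = W" using inv(3) W by simp
  finally show ?thesis .
qed

lemma det_one_plus_gram_neq_0:
  fixes F :: "real mat"
  assumes F: "F \<in> carrier_mat R N" and c: "c \<ge> 0"
  shows "det (1\<^sub>m R + c \<cdot>\<^sub>m (F * transpose_mat F)) \<noteq> 0"
proof
  let ?\<Phi> = "1\<^sub>m R + c \<cdot>\<^sub>m (F * transpose_mat F)"
  assume "det ?\<Phi> = 0"
  then obtain v where v: "v \<in> carrier_vec R" "v \<noteq> 0\<^sub>v R" "?\<Phi> *\<^sub>v v = 0\<^sub>v R"
    using det_0_iff_vec_prod_zero_field[of ?\<Phi> R] F by auto
  define w where "w = transpose_mat F *\<^sub>v v"
  have w: "w \<in> carrier_vec N" using F v by (simp add: w_def)
  have "?\<Phi> *\<^sub>v v = v + c \<cdot>\<^sub>v (F *\<^sub>v w)"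
    using F v by (simp add: w_def add_mult_distrib_mat_vec[of _ R R] smult_mult_mat_vec[of _ R R])
  with v(3) have "v + c \<cdot>\<^sub>v (F *\<^sub>v w) = 0\<^sub>v R" by simp
  with v(1) have "0 = v \<bullet> (v + c \<cdot>\<^sub>v (F *\<^sub>v w))" by simp
  also have "\<dots> = v \<bullet> v + c * (w \<bullet> w)"
    using v w F transpose_vec_mult_scalar[OF F w v(1)]
    by (simp add: scalar_prod_add_distrib[of _ R] w_def)
  finally have "v \<bullet> v + c * (w \<bullet> w) = 0" ..
  moreover have "v \<bullet> v > 0" using conjugate_square_greater_0_vec[OF v(1)] v(2) by simp
  moreover have "w \<bullet> w \<ge> 0" using conjugate_square_ge_0_vec[of w] by simp
  ultimately show False using c by (smt (verit) mult_nonneg_nonneg)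
qed

lemma minv_one_plus_gram_carrier:
  fixes F :: "real mat"
  assumes "F \<in> carrier_mat R N" and "c \<ge> 0"
  shows "minv (1\<^sub>m R + c \<cdot>\<^sub>m (F * transpose_mat F)) \<in> carrier_mat R R"
  using minv_inverse(1)[OF _ det_one_plus_gram_neq_0[OF assms]] assms(1) by simp

lemma push_through:
  fixes F :: "'a :: comm_ring_1 mat"
  assumes F: "F \<in> carrier_mat R N"
  shows "transpose_mat F * (1\<^sub>m R + c \<cdot>\<^sub>m (F * transpose_mat F))
       = (1\<^sub>m N + c \<cdot>\<^sub>m (transpose_mat F * F)) * transpose_mat F"
proof -
  let ?Ft = "transpose_mat F"
  have Ft: "?Ft \<in> carrier_mat N R" using F by simp
  have FFt: "F * ?Ft \<in> carrier_mat R R" and FtF: "?Ft * F \<in> carrier_mat N N" using F by auto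
  have "?Ft * (1\<^sub>m R + c \<cdot>\<^sub>m (F * ?Ft)) = ?Ft * 1\<^sub>m R + ?Ft * (c \<cdot>\<^sub>m (F * ?Ft))"
    using F Ft by (intro mult_add_distrib_mat) auto
  also have "\<dots> = 1\<^sub>m N * ?Ft + (c \<cdot>\<^sub>m (?Ft * F)) * ?Ft"
    using Ft mult_smult_distrib[OF Ft FFt] mult_smult_assoc_mat[OF FtF Ft] assoc_mult_mat[OF Ft F Ft]
    by simp
  also have "\<dots> = (1\<^sub>m N + c \<cdot>\<^sub>m (?Ft * F)) * ?Ft"
    using F Ft by (intro add_mult_distrib_mat[symmetric]) auto
  finally show ?thesis .
qed

lemma woodbury_identity:
  fixes F P :: "'a :: comm_ring_1 mat"
  assumes F: "F \<in> carrier_mat R N" and P: "P \<in> carrier_mat R R"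
    and inv: "(1\<^sub>m R + c \<cdot>\<^sub>m (F * transpose_mat F)) * P = 1\<^sub>m R"
  shows "(1\<^sub>m N + c \<cdot>\<^sub>m (transpose_mat F * F)) * (1\<^sub>m N - c \<cdot>\<^sub>m (transpose_mat F * P * F)) = 1\<^sub>m N"
proof -
  let ?Ft = "transpose_mat F"
  let ?\<Phi> = "1\<^sub>m R + c \<cdot>\<^sub>m (F * ?Ft)"
  let ?\<Psi> = "1\<^sub>m N + c \<cdot>\<^sub>m (?Ft * F)"
  have Ft: "?Ft \<in> carrier_mat N R" using F by simp
  have \<Phi>: "?\<Phi> \<in> carrier_mat R R" and \<Psi>: "?\<Psi> \<in> carrier_mat N N" using F by auto
  have PF: "P * F \<in> carrier_mat R N" using P F by simp
  have "?\<Psi> * (?Ft * P * F) = (?\<Psi> * ?Ft) * (P * F)"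
    using assoc_mult_mat[OF \<Psi> Ft PF] assoc_mult_mat[OF Ft P F] by simp
  also have "\<dots> = (?Ft * ?\<Phi>) * (P * F)" by (simp add: push_through[OF F])
  also have "\<dots> = ?Ft * ((?\<Phi> * P) * F)"
    using assoc_mult_mat[OF Ft \<Phi> PF] assoc_mult_mat[OF \<Phi> P F] by simp
  also have "\<dots> = ?Ft * F" using inv F by simp
  finally have key: "?\<Psi> * (?Ft * P * F) = ?Ft * F" .
  have "?\<Psi> * (1\<^sub>m N - c \<cdot>\<^sub>m (?Ft * P * F)) = ?\<Psi> * 1\<^sub>m N - ?\<Psi> * (c \<cdot>\<^sub>m (?Ft * P * F))"
    using \<Psi> Ft P F by (intro mult_minus_distrib_mat) auto
  also have "\<dots> = ?\<Psi> - c \<cdot>\<^sub>m (?\<Psi> * (?Ft * P * F))"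
    using right_mult_one_mat[OF \<Psi>] mult_smult_distrib[OF \<Psi> mult_carrier_mat[OF mult_carrier_mat[OF Ft P] F]]
    by simp
  also have "\<dots> = 1\<^sub>m N" unfolding key using F by (intro eq_matI) auto
  finally show ?thesis .
qed

lemma minv_gram_plus_smult_one:
  fixes F :: "real mat"
  assumes F: "F \<in> carrier_mat R N" and s: "s > 0"
  shows "minv (transpose_mat F * F + s \<cdot>\<^sub>m 1\<^sub>m N)
       = (1 / s) \<cdot>\<^sub>m (1\<^sub>m N - (1 / s) \<cdot>\<^sub>m
           (transpose_mat F * minv (1\<^sub>m R + (1 / s) \<cdot>\<^sub>m (F * transpose_mat F)) * F))"
    (is "minv ?K = (1 / s) \<cdot>\<^sub>m ?X")
proof (rule minv_eqI)
  let ?\<Phi> = "1\<^sub>m R + (1 / s) \<cdot>\<^sub>m (F * transpose_mat F)"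
  let ?\<Psi> = "1\<^sub>m N + (1 / s) \<cdot>\<^sub>m (transpose_mat F * F)"
  have \<Phi>: "?\<Phi> \<in> carrier_mat R R" and \<Psi>: "?\<Psi> \<in> carrier_mat N N" using F by auto
  have P: "minv ?\<Phi> \<in> carrier_mat R R" "?\<Phi> * minv ?\<Phi> = 1\<^sub>m R"
    using minv_inverse[OF \<Phi> det_one_plus_gram_neq_0[OF F]] s by auto
  then have X: "?X \<in> carrier_mat N N" using F by (simp add: minus_carrier_mat)
  then show "(1 / s) \<cdot>\<^sub>m ?X \<in> carrier_mat N N" by simp
  show "?K \<in> carrier_mat N N" using F by simp
  have "?K = s \<cdot>\<^sub>m ?\<Psi>" using F s by (intro eq_matI) (auto simp: field_simps)
  then have "?K * ((1 / s) \<cdot>\<^sub>m ?X) = s \<cdot>\<^sub>m ((1 / s) \<cdot>\<^sub>m (?\<Psi> * ?X))"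
    using mult_smult_assoc_mat[OF \<Psi> smult_carrier_mat[OF X]] mult_smult_distrib[OF \<Psi> X] by simp
  also have "?\<Psi> * ?X = 1\<^sub>m N" by (rule woodbury_identity[OF F P])
  finally show "?K * ((1 / s) \<cdot>\<^sub>m ?X) = 1\<^sub>m N" using s by (auto intro: eq_matI)
qed

lemma icf_mean_woodbury:
  fixes F A :: "real mat" and v :: "real vec"
  assumes F: "F \<in> carrier_mat R N" and A: "A \<in> carrier_mat n N" and v: "v \<in> carrier_vec N"
    and s: "s > 0"
  shows "A *\<^sub>v (minv (transpose_mat F * F + s \<cdot>\<^sub>m 1\<^sub>m N) *\<^sub>v v)
       = (1 / s) \<cdot>\<^sub>v (A *\<^sub>v v) - (1 / s\<^sup>2) \<cdot>\<^sub>v ((A * transpose_mat F) *\<^sub>v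
           (minv (1\<^sub>m R + (1 / s) \<cdot>\<^sub>m (F * transpose_mat F)) *\<^sub>v (F *\<^sub>v v)))"
proof -
  let ?Ft = "transpose_mat F"
  let ?P = "minv (1\<^sub>m R + (1 / s) \<cdot>\<^sub>m (F * ?Ft))"
  let ?z = "?P *\<^sub>v (F *\<^sub>v v)"
  have Ft: "?Ft \<in> carrier_mat N R" using F by simp
  have P: "?P \<in> carrier_mat R R" using minv_one_plus_gram_carrier[OF F] s by simp
  have z: "?z \<in> carrier_vec R" using P F v by simp
  have Q: "?Ft * ?P * F \<in> carrier_mat N N" using F P by simp
  have "?Ft * ?P * F *\<^sub>v v = ?Ft *\<^sub>v ?z"
    using assoc_mult_mat_vec[OF mult_carrier_mat[OF Ft P] F v] assoc_mult_mat_vec[OF Ft P] F v by simp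
  then have "minv (?Ft * F + s \<cdot>\<^sub>m 1\<^sub>m N) *\<^sub>v v = (1 / s) \<cdot>\<^sub>v (v - (1 / s) \<cdot>\<^sub>v (?Ft *\<^sub>v ?z))"
    using Q v by (simp add: minv_gram_plus_smult_one[OF F s] smult_mult_mat_vec[of _ N N]
        minus_mult_distrib_mat_vec[of _ N N] minus_carrier_mat)
  then have "A *\<^sub>v (minv (?Ft * F + s \<cdot>\<^sub>m 1\<^sub>m N) *\<^sub>v v)
      = (1 / s) \<cdot>\<^sub>v (A *\<^sub>v v - (1 / s) \<cdot>\<^sub>v ((A * ?Ft) *\<^sub>v ?z))"
    using A Ft v z by (simp add: mult_mat_vec[of _ n N] mult_minus_distrib_mat_vec[of _ n N])
  then show ?thesis
    using A Ft v z by (intro eq_vecI) (auto simp: power2_eq_square diff_divide_distrib)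
qed

lemma icf_cov_woodbury:
  fixes F A B :: "real mat"
  assumes F: "F \<in> carrier_mat R N" and A: "A \<in> carrier_mat n N" and B: "B \<in> carrier_mat N n'"
    and s: "s > 0"
  shows "A * minv (transpose_mat F * F + s \<cdot>\<^sub>m 1\<^sub>m N) * B
       = (1 / s) \<cdot>\<^sub>m (A * B) - (1 / s\<^sup>2) \<cdot>\<^sub>m ((A * transpose_mat F) *
           (minv (1\<^sub>m R + (1 / s) \<cdot>\<^sub>m (F * transpose_mat F)) * (F * B)))"
proof -
  let ?Ft = "transpose_mat F"
  let ?P = "minv (1\<^sub>m R + (1 / s) \<cdot>\<^sub>m (F * ?Ft))"
  let ?Q = "?Ft * ?P * F"
  have Ft: "?Ft \<in> carrier_mat N R" using F by simp
  have P: "?P \<in> carrier_mat R R" using minv_one_plus_gram_carrier[OF F] s by simp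
  have Q: "?Q \<in> carrier_mat N N" using F P by simp
  have AQ: "A * ?Q \<in> carrier_mat n N" using A Q by simp
  have "A * minv (?Ft * F + s \<cdot>\<^sub>m 1\<^sub>m N) = (1 / s) \<cdot>\<^sub>m (A - (1 / s) \<cdot>\<^sub>m (A * ?Q))"
    using A Q by (simp add: minv_gram_plus_smult_one[OF F s] mult_smult_distrib[of _ n N _ N]
        mult_minus_distrib_mat[of _ n N _ N] minus_carrier_mat)
  then have "A * minv (?Ft * F + s \<cdot>\<^sub>m 1\<^sub>m N) * B = (1 / s) \<cdot>\<^sub>m (A * B - (1 / s) \<cdot>\<^sub>m (A * ?Q * B))"
    using A B AQ by (simp add: mult_smult_assoc_mat[of _ n N _ n'] minus_mult_distrib_mat[of _ n N _ _ n'] minus_carrier_mat)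
  also have "A * ?Q * B = (A * ?Ft) * (?P * (F * B))"
  proof -
    have PF: "?P * F \<in> carrier_mat R N" and FB: "F * B \<in> carrier_mat R n'" using P F B by auto
    have "?Q = ?Ft * (?P * F)" using assoc_mult_mat[OF Ft P F] .
    moreover have "A * (?Ft * (?P * F)) * B = A * (?Ft * (?P * (F * B)))"
      using assoc_mult_mat[OF A mult_carrier_mat[OF Ft PF] B] assoc_mult_mat[OF Ft PF B]
        assoc_mult_mat[OF P F B] by simp
    moreover have "(A * ?Ft) * (?P * (F * B)) = A * (?Ft * (?P * (F * B)))"
      using assoc_mult_mat[OF A Ft mult_carrier_mat[OF P FB]] .
    ultimately show ?thesis by simp
  qed
  finally show ?thesis
    using A B Ft P F by (intro eq_matI) (auto simp: power2_eq_square diff_divide_distrib)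
qed

section \<open>Collapsing the local summaries\<close>

lemma vsum_part_mean_terms:
  assumes A: "A \<in> carrier_mat n (length (concat xss))" and F: "F \<in> carrier_mat R (length (concat xss))"
    and B: "B \<in> carrier_mat (length (concat xss)) n" and v: "v \<in> carrier_vec (length (concat xss))"
    and z: "z \<in> carrier_vec R"
  shows "vsum n (\<lambda>m. a \<cdot>\<^sub>v (part_cols A xss m *\<^sub>v part_vec v xss m)
                    - b \<cdot>\<^sub>v (transpose_mat (part_cols F xss m * part_rows B xss m) *\<^sub>v z)) (length xss)
       = a \<cdot>\<^sub>v (A *\<^sub>v v) - b \<cdot>\<^sub>v (transpose_mat (F * B) *\<^sub>v z)"
proof -
  have X: "part_cols A xss m *\<^sub>v part_vec v xss m \<in> carrier_vec n" for m
    using mult_mat_vec_carrier[OF part_cols_carrier[OF A] part_vec_carrier] .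
  have Y: "part_cols F xss m * part_rows B xss m \<in> carrier_mat R n" for m
    using mult_carrier_mat[OF part_cols_carrier[OF F] part_rows_carrier[OF B]] .
  have Yz: "transpose_mat (part_cols F xss m * part_rows B xss m) *\<^sub>v z \<in> carrier_vec n" for m
    using Y z by (simp add: mult_mat_vec_carrier[of _ n R])
  have "vsum n (\<lambda>m. a \<cdot>\<^sub>v (part_cols A xss m *\<^sub>v part_vec v xss m)
                    - b \<cdot>\<^sub>v (transpose_mat (part_cols F xss m * part_rows B xss m) *\<^sub>v z)) (length xss)
      = a \<cdot>\<^sub>v vsum n (\<lambda>m. part_cols A xss m *\<^sub>v part_vec v xss m) (length xss)
        - b \<cdot>\<^sub>v vsum n (\<lambda>m. transpose_mat (part_cols F xss m * part_rows B xss m) *\<^sub>v z) (length xss)"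
    using X Yz by (simp add: vsum_diff vsum_smult)
  also have "vsum n (\<lambda>m. transpose_mat (part_cols F xss m * part_rows B xss m) *\<^sub>v z) (length xss)
      = transpose_mat (F * B) *\<^sub>v z"
    using Y z by (simp add: vsum_mult_mat_vec[where p = R] msum_transpose msum_part_products[OF F B])
  finally show ?thesis by (simp only: vsum_part_products[OF A v])
qed

lemma msum_part_cov_terms:
  assumes A: "A \<in> carrier_mat n (length (concat xss))" and F: "F \<in> carrier_mat R (length (concat xss))"
    and B: "B \<in> carrier_mat (length (concat xss)) n" and S: "S \<in> carrier_mat R n"
  shows "msum n n (\<lambda>m. a \<cdot>\<^sub>m (part_cols A xss m * part_rows B xss m)
                    - b \<cdot>\<^sub>m (transpose_mat (part_cols F xss m * part_rows B xss m) * S)) (length xss)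
       = a \<cdot>\<^sub>m (A * B) - b \<cdot>\<^sub>m (transpose_mat (F * B) * S)"
proof -
  have X: "part_cols A xss m * part_rows B xss m \<in> carrier_mat n n" for m
    using mult_carrier_mat[OF part_cols_carrier[OF A] part_rows_carrier[OF B]] .
  have Y: "part_cols F xss m * part_rows B xss m \<in> carrier_mat R n" for m
    using mult_carrier_mat[OF part_cols_carrier[OF F] part_rows_carrier[OF B]] .
  have YS: "transpose_mat (part_cols F xss m * part_rows B xss m) * S \<in> carrier_mat n n" for m
    using Y S by (simp add: mult_carrier_mat[of _ n R])
  have "msum n n (\<lambda>m. a \<cdot>\<^sub>m (part_cols A xss m * part_rows B xss m)
                    - b \<cdot>\<^sub>m (transpose_mat (part_cols F xss m * part_rows B xss m) * S)) (length xss)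
      = a \<cdot>\<^sub>m msum n n (\<lambda>m. part_cols A xss m * part_rows B xss m) (length xss)
        - b \<cdot>\<^sub>m msum n n (\<lambda>m. transpose_mat (part_cols F xss m * part_rows B xss m) * S) (length xss)"
    using X YS by (simp add: msum_diff msum_smult)
  also have "msum n n (\<lambda>m. transpose_mat (part_cols F xss m * part_rows B xss m) * S) (length xss)
      = transpose_mat (F * B) * S"
    using Y S by (simp add: msum_mult_right[where p = R] msum_transpose msum_part_products[OF F B])
  finally show ?thesis by (simp only: msum_part_products[OF A B])
qed

theorem theorem3:
  fixes \<mu> :: "'x \<Rightarrow> real" and \<sigma> :: "'x \<Rightarrow> 'x \<Rightarrow> real" and y :: "'x \<Rightarrow> real"
    and Ds :: "'x list list" and us :: "'x list"
    and \<sigma>n :: real and F :: "real mat" and R M :: nat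
  assumes GP: "cov_kernel \<sigma>"
    and M: "length Ds = M" "M > 0"
    and D_distinct: "distinct (concat Ds)"
    and D_equal: "\<forall>m<M. length (Ds ! m) = length (concat Ds) div M"
    and U_distinct: "distinct us"
    and U_disj: "set us \<inter> set (concat Ds) = {}"
    and noise: "\<sigma>n\<^sup>2 > 0"
    and F_dim: "F \<in> carrier_mat R (length (concat Ds))"
    and F_ut: "upper_triangular F"
  shows
   "let ds = concat Ds; n = length us;
        off = (\<lambda>m. sum_list (map length (take m Ds)));
        Fm = (\<lambda>m. col_block F (off m) (length (Ds ! m)));
        r = (\<lambda>m. vec_on y (Ds ! m) - vec_on \<mu> (Ds ! m));
        ydot = (\<lambda>m. Fm m *\<^sub>v r m);
        Sdot = (\<lambda>m. Fm m * cov_mat \<sigma> (Ds ! m) us);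
        Phim = (\<lambda>m. Fm m * transpose_mat (Fm m));
        Phi = 1\<^sub>m R + (1 / \<sigma>n\<^sup>2) \<cdot>\<^sub>m msum R R Phim M;
        yddot = minv Phi *\<^sub>v vsum R ydot M;
        Sddot = minv Phi * msum R n Sdot M;
        mut = (\<lambda>m. (1 / \<sigma>n\<^sup>2) \<cdot>\<^sub>v (cov_mat \<sigma> us (Ds ! m) *\<^sub>v r m)
                   - (1 / \<sigma>n ^ 4) \<cdot>\<^sub>v (transpose_mat (Sdot m) *\<^sub>v yddot));
        St = (\<lambda>m. (1 / \<sigma>n\<^sup>2) \<cdot>\<^sub>m (cov_mat \<sigma> us (Ds ! m) * cov_mat \<sigma> (Ds ! m) us)
                   - (1 / \<sigma>n ^ 4) \<cdot>\<^sub>m (transpose_mat (Sdot m) * Sddot));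
        mu_tilde = vec_on \<mu> us + vsum n mut M;
        Sigma_tilde = cov_mat \<sigma> us us - msum n n St M;
        K = transpose_mat F * F + \<sigma>n\<^sup>2 \<cdot>\<^sub>m 1\<^sub>m (length ds);
        mu_ICF = vec_on \<mu> us + cov_mat \<sigma> us ds *\<^sub>v (minv K *\<^sub>v (vec_on y ds - vec_on \<mu> ds));
        Sigma_ICF = cov_mat \<sigma> us us - cov_mat \<sigma> us ds * minv K * cov_mat \<sigma> ds us
    in mu_tilde = mu_ICF \<and> Sigma_tilde = Sigma_ICF"
proof -
  let ?\<Phi> = "1\<^sub>m R + (1 / \<sigma>n\<^sup>2) \<cdot>\<^sub>m (F * transpose_mat F)"
  have P: "minv ?\<Phi> \<in> carrier_mat R R" using minv_one_plus_gram_carrier[OF F_dim] noise by simp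
  have FB: "transpose_mat (F * cov_mat \<sigma> (concat Ds) us) = cov_mat \<sigma> us (concat Ds) * transpose_mat F"
    using GP by (simp add: transpose_mult[OF F_dim cov_mat_carrier] transpose_cov_mat)
  have s4: "(\<sigma>n\<^sup>2)\<^sup>2 = \<sigma>n ^ 4" by (simp flip: power_mult)
  show ?thesis
    using F_dim P noise
    unfolding Let_def block_offset_def[symmetric] part_cols_def[symmetric] vec_on_diff M(1)[symmetric]
    \<comment> \<open>write every local quantity as a block of the global one, then collapse the sums\<close>
    by (simp only: part_cols_cov_mat[symmetric] part_rows_cov_mat[symmetric] part_vec_vec_on[symmetric]
          transpose_part_cols[OF F_dim] cong: msum_cong vsum_cong)
      (simp add: msum_part_products vsum_part_products vsum_part_mean_terms msum_part_cov_terms FB s4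
          icf_mean_woodbury[OF F_dim cov_mat_carrier vec_on_carrier]
          icf_cov_woodbury[OF F_dim cov_mat_carrier cov_mat_carrier])
qed

end
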